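(* Let $k\subset L$ be an FCP radicial (purely inseparable) field extension, with $p:=\mathrm{c}(k)$ and $[L:k]=p^n$. Then: (1) $\mathcal S[k,L]=\{x\in L\mid x^p\in k\}$. (2) If $k\subset L$ has FIP, then the Loewy series of $k\subset L$ is $[k,L]$ (i.e. its terms are exactly the elements of $[k,L]$), and $\pounds[k,L]=n$.
   Context: $\mathrm{c}(k)$ is the characteristic of $k$. $[k,L]$ is the lattice of intermediate fields; FCP means every chain in $[k,L]$ is finite, FIP means $[k,L]$ is finite. $K\subset K'$ is minimal if $[K,K']=\{K,K'\}$; an atom of $[k,L]$ is $K$ with $k\subset K$ minimal; the socle $\mathcal S[k,L]$ is the compositum of all atoms. Loewy series: $S_0=k$, $S_{i+1}=\mathcal S[S_i,L]$ while $S_i\neq L$; $\pounds[k,L]$ is the least $n$ with $S_n=L$. *)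

theory Defs
  imports "HOL-Algebra.Algebra"
begin

text \<open>All fields are subfields of an ambient field R (a ring record).\<close>

definition char_of :: "('a, 'b) ring_scheme \<Rightarrow> nat" where
  "char_of R = (if \<exists>n::nat. n > 0 \<and> add_pow R n \<one>\<^bsub>R\<^esub> = \<zero>\<^bsub>R\<^esub>
                then (LEAST n::nat. n > 0 \<and> add_pow R n \<one>\<^bsub>R\<^esub> = \<zero>\<^bsub>R\<^esub>) else 0)"

definition interm :: "('a, 'b) ring_scheme \<Rightarrow> 'a set \<Rightarrow> 'a set \<Rightarrow> 'a set set" where
  "interm R K K' = {M. subfield M R \<and> K \<subseteq> M \<and> M \<subseteq> K'}"

definition FCP :: "('a, 'b) ring_scheme \<Rightarrow> 'a set \<Rightarrow> 'a set \<Rightarrow> bool" where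
  "FCP R K K' \<longleftrightarrow> (\<forall>C. C \<subseteq> interm R K K' \<and> Complete_Partial_Order.chain (\<subseteq>) C \<longrightarrow> finite C)"

definition FIP :: "('a, 'b) ring_scheme \<Rightarrow> 'a set \<Rightarrow> 'a set \<Rightarrow> bool" where
  "FIP R K K' \<longleftrightarrow> finite (interm R K K')"

definition minimal_ext :: "('a, 'b) ring_scheme \<Rightarrow> 'a set \<Rightarrow> 'a set \<Rightarrow> bool" where
  "minimal_ext R K K' \<longleftrightarrow> K \<subseteq> K' \<and> K \<noteq> K' \<and> interm R K K' = {K, K'}"

definition atoms :: "('a, 'b) ring_scheme \<Rightarrow> 'a set \<Rightarrow> 'a set \<Rightarrow> 'a set set" where
  "atoms R K K' = {M \<in> interm R K K'. minimal_ext R K M}"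

definition socle :: "('a, 'b) ring_scheme \<Rightarrow> 'a set \<Rightarrow> 'a set \<Rightarrow> 'a set" where
  "socle R K K' = generate_field R (K \<union> \<Union> (atoms R K K'))"

primrec loewy :: "('a, 'b) ring_scheme \<Rightarrow> 'a set \<Rightarrow> 'a set \<Rightarrow> nat \<Rightarrow> 'a set" where
  "loewy R K K' 0 = K"
| "loewy R K K' (Suc i) = (if loewy R K K' i = K' then K' else socle R (loewy R K K' i) K')"

definition loewy_length :: "('a, 'b) ring_scheme \<Rightarrow> 'a set \<Rightarrow> 'a set \<Rightarrow> nat" where
  "loewy_length R K K' = (LEAST n. loewy R K K' n = K')"

text \<open>Radicial (purely inseparable) extension, with the characteristic exponent convention:
  in characteristic 0 only the trivial extension is radicial.\<close>
definition radicial :: "('a, 'b) ring_scheme \<Rightarrow> 'a set \<Rightarrow> 'a set \<Rightarrow> bool" where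
  "radicial R K K' \<longleftrightarrow>
     (if char_of R = 0 then K' = K
      else (\<forall>x\<in>K'. \<exists>e::nat. x [^]\<^bsub>R\<^esub> (char_of R ^ e) \<in> K))"

end

theory Submission
  imports Defs
begin

text \<open>
  In characteristic \<open>p\<close> the Frobenius map is an injective ring endomorphism, so
  \<open>S = {x \<in> L. x\<^sup>p \<in> K}\<close> is a field. For \<open>x \<notin> K\<close> with \<open>x\<^sup>p \<in> K\<close>, the minimal
  polynomial of \<open>x\<close> divides \<open>X\<^sup>p - x\<^sup>p = (X - x)\<^sup>p\<close>, so it is \<open>(X - x)\<^sup>d\<close>; its
  constant term \<open>(-x)\<^sup>d\<close> lies in \<open>K\<close>, which forces \<open>d = p\<close>. Hence \<open>K(x)\<close> has degree
  \<open>p\<close> and is an atom, and in a radicial extension every atom is of this form (push any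
  element down by \<open>p\<close>-th powers until its next power falls into \<open>K\<close>). So the socle
  is \<open>S\<close>.

  Under FIP, \<open>S = K(x)\<close> for every such \<open>x\<close>: otherwise, for \<open>y \<in> S - K(x)\<close> the
  fields \<open>K(x + c y)\<close>, \<open>c \<in> K\<close>, are pairwise distinct, so \<open>K\<close> is finite, hence
  perfect, and \<open>x \<in> K\<close>. Thus each step of the Loewy series has degree \<open>p\<close>, the series
  reaches \<open>L\<close> after exactly \<open>n\<close> steps, and it is contained in every intermediate
  field strictly above the previous term, so it exhausts \<open>[k, L]\<close>.
\<close>

section \<open>Frobenius in characteristic \<open>p\<close>\<close>

lemma (in cring) binomial_ring:
  assumes x: "x \<in> carrier R" and y: "y \<in> carrier R"
  shows "(x \<oplus> y) [^] n = (\<Oplus>i\<in>{..n}. add_pow R (n choose i) (x [^] i \<otimes> y [^] (n - i)))"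
proof (induction n)
  case 0
  then show ?case using x y by simp
next
  case (Suc n)
  define t where "t = (\<lambda>m i. add_pow R (m choose i) (x [^] i \<otimes> y [^] (m - i)))"
  define u where "u = (\<lambda>i. add_pow R (n choose i) (x [^] Suc i \<otimes> y [^] (n - i)))"
  define v where "v = (\<lambda>i. add_pow R (n choose Suc i) (x [^] Suc i \<otimes> y [^] (n - i)))"
  define w where "w = (\<lambda>i. add_pow R (n choose i) (x [^] i \<otimes> y [^] (Suc n - i)))"
  have t_closed: "t m \<in> A \<rightarrow> carrier R" for m A using x y by (auto simp: t_def)
  have u_closed: "u \<in> A \<rightarrow> carrier R" for A using x y by (auto simp: u_def)
  have v_closed: "v \<in> A \<rightarrow> carrier R" for A using x y by (auto simp: v_def)
  have w_closed: "w \<in> A \<rightarrow> carrier R" for A using x y by (auto simp: w_def)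
  have "finsum R (t n) {..n} \<otimes> x = (\<Oplus>i\<in>{..n}. t n i \<otimes> x)"
    using x t_closed by (simp add: finsum_ldistr)
  also have "\<dots> = finsum R u {..n}"
    using x y by (intro finsum_cong') (auto simp: t_def u_def add_pow_ldistr add_pow_rdistr m_ac)
  finally have times_x: "finsum R (t n) {..n} \<otimes> x = finsum R u {..n}" .
  have "finsum R (t n) {..n} \<otimes> y = (\<Oplus>i\<in>{..n}. t n i \<otimes> y)"
    using y t_closed by (simp add: finsum_ldistr)
  also have "\<dots> = finsum R w {..n}"
    using x y
    by (intro finsum_cong') (auto simp: t_def w_def add_pow_ldistr add_pow_rdistr m_ac Suc_diff_le)
  also have "\<dots> = finsum R w {..Suc n}"
    using finsum_Suc[OF w_closed, of n] x y by (simp add: w_def binomial_eq_0)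
  also have "\<dots> = finsum R v {..n} \<oplus> t (Suc n) 0"
    using finsum_Suc2[OF w_closed, of n] by (simp add: w_def v_def t_def)
  finally have times_y: "finsum R (t n) {..n} \<otimes> y = finsum R v {..n} \<oplus> t (Suc n) 0" .
  have "(x \<oplus> y) [^] Suc n = finsum R (t n) {..n} \<otimes> x \<oplus> finsum R (t n) {..n} \<otimes> y"
    using Suc x y t_closed by (simp add: t_def r_distr)
  also have "\<dots> = (finsum R u {..n} \<oplus> finsum R v {..n}) \<oplus> t (Suc n) 0"
    using u_closed v_closed t_closed[of "Suc n" "{0}"] by (simp add: times_x times_y a_assoc)
  also have "finsum R u {..n} \<oplus> finsum R v {..n} = (\<Oplus>i\<in>{..n}. t (Suc n) (Suc i))"
    using u_closed v_closed x y
    by (auto simp: finsum_addf[symmetric] u_def v_def t_def add.nat_pow_mult intro!: finsum_cong')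
  also have "(\<Oplus>i\<in>{..n}. t (Suc n) (Suc i)) \<oplus> t (Suc n) 0 = finsum R (t (Suc n)) {..Suc n}"
    by (rule finsum_Suc2[symmetric]) (rule t_closed)
  finally show ?case by (simp add: t_def)
qed

lemma (in cring) freshmans_dream:
  assumes p: "Factorial_Ring.prime (p::nat)" and char: "add_pow R p \<one> = \<zero>"
    and x: "x \<in> carrier R" and y: "y \<in> carrier R"
  shows "(x \<oplus> y) [^] p = x [^] p \<oplus> y [^] p"
proof -
  define t where "t = (\<lambda>i. add_pow R (p choose i) (x [^] i \<otimes> y [^] (p - i)))"
  have t_closed: "t \<in> A \<rightarrow> carrier R" for A using x y by (auto simp: t_def)
  obtain r where r: "p = Suc (Suc r)"
    using prime_ge_2_nat[OF p] by (metis add_2_eq_Suc le_Suc_ex)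
  have middle_terms: "t i = \<zero>" if i: "0 < i" "i < p" for i
  proof -
    obtain m where m: "p choose i = p * m"
      using dvd_choose_prime[of i p] i p by auto
    have "add_pow R p (x [^] i \<otimes> y [^] (p - i)) = \<zero>"
      using add_pow_ldistr[of \<one> "x [^] i \<otimes> y [^] (p - i)" p] x y char by simp
    then show ?thesis
      using x y by (simp add: t_def m add.nat_pow_pow[symmetric])
  qed
  have "(x \<oplus> y) [^] p = finsum R t {..Suc (Suc r)}"
    unfolding t_def r[symmetric] by (rule binomial_ring[OF x y])
  also have "\<dots> = t (Suc (Suc r)) \<oplus> finsum R t {..Suc r}"
    by (rule finsum_Suc[OF t_closed])
  also have "finsum R t {..Suc r} = (\<Oplus>i\<in>{..r}. t (Suc i)) \<oplus> t 0"
    by (rule finsum_Suc2[OF t_closed])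
  also have "(\<Oplus>i\<in>{..r}. t (Suc i)) = (\<Oplus>i\<in>{..r}. \<zero>)"
    by (intro finsum_cong') (auto simp: middle_terms r)
  finally show ?thesis using x y by (simp add: t_def r)
qed

lemma (in cring) freshmans_dream_uminus:
  assumes p: "Factorial_Ring.prime (p::nat)" and char: "add_pow R p \<one> = \<zero>" and x: "x \<in> carrier R"
  shows "(\<ominus> x) [^] p = \<ominus> (x [^] p)"
proof -
  have "x [^] p \<oplus> (\<ominus> x) [^] p = (x \<oplus> \<ominus> x) [^] p"
    using freshmans_dream[OF p char x] x by simp
  also have "\<dots> = \<zero>"
    using x prime_gt_0_nat[OF p] by (simp add: r_neg nat_pow_zero)
  finally show ?thesis
    using x by (metis add.inv_closed minus_equality nat_pow_closed add.m_comm)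
qed

lemma (in cring) freshmans_dream_minus:
  assumes "Factorial_Ring.prime (p::nat)" and "add_pow R p \<one> = \<zero>"
    and "x \<in> carrier R" and "y \<in> carrier R"
  shows "(x \<ominus> y) [^] p = x [^] p \<ominus> y [^] p"
  using assms freshmans_dream[OF assms(1,2,3), of "\<ominus> y"] freshmans_dream_uminus[OF assms(1,2,4)]
  by (simp add: a_minus_def)

lemma (in ring) add_pow_char_of: "add_pow R (char_of R) \<one> = \<zero>"
proof (cases "\<exists>n::nat. n > 0 \<and> add_pow R n \<one> = \<zero>")
  case True
  then show ?thesis unfolding char_of_def using LeastI_ex[OF True] by simp
next
  case False
  then show ?thesis unfolding char_of_def if_not_P[OF False] by simp
qed

lemma (in domain) prime_char_of:
  assumes pos: "char_of R > 0"
  shows "Factorial_Ring.prime (char_of R)"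
proof -
  let ?c = "char_of R"
  have ex: "\<exists>n::nat. n > 0 \<and> add_pow R n \<one> = \<zero>"
    using pos unfolding char_of_def by (auto split: if_splits)
  have minimal: "add_pow R m \<one> \<noteq> \<zero>" if "0 < m" "m < ?c" for m
    using not_less_Least[of m "\<lambda>n. n > 0 \<and> add_pow R n \<one> = \<zero>"] that ex
    unfolding char_of_def by auto
  have "?c \<noteq> 1"
    using add_pow_char_of by auto
  then have gt1: "?c > 1" using pos by linarith
  show ?thesis
    unfolding prime_nat_iff
  proof (intro conjI allI impI gt1)
    fix m assume "m dvd ?c"
    then obtain j where j: "?c = m * j" by auto
    have "add_pow R m \<one> \<otimes> add_pow R j \<one> = add_pow R (m * j) \<one>"
      by (simp add: add_pow_ldistr add.nat_pow_pow mult.commute)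
    then have "add_pow R m \<one> = \<zero> \<or> add_pow R j \<one> = \<zero>"
      using add_pow_char_of j integral by simp
    moreover have "0 < m" "0 < j" using j pos by auto
    ultimately have "?c \<le> m \<or> ?c \<le> j" using minimal not_le by blast
    then show "m = 1 \<or> m = ?c"
    proof
      assume "?c \<le> m"
      moreover have "m \<le> ?c" using j \<open>0 < j\<close> by simp
      ultimately show ?thesis by simp
    next
      assume "?c \<le> j"
      then have "m * ?c \<le> ?c" using j by (metis mult_le_mono2)
      then show ?thesis using \<open>0 < m\<close> pos by simp
    qed
  qed
qed

lemma (in domain) nat_pow_eq_zero_imp_zero:
  "x \<in> carrier R \<Longrightarrow> x [^] (n::nat) = \<zero> \<Longrightarrow> x = \<zero>"
  by (induction n) (auto simp: integral_iff)

lemma subring_nat_pow_closed: "subring K R \<Longrightarrow> x \<in> K \<Longrightarrow> x [^]\<^bsub>R\<^esub> (n::nat) \<in> K"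
  by (induction n) (auto simp: subringE(3,6))

lemma (in field) nat_pow_coprime_mem:
  assumes K: "subfield K R" and z: "z \<in> carrier R"
    and za: "z [^] a \<in> K" and zb: "z [^] b \<in> K" and "coprime a b" and "a > (0::nat)"
  shows "z \<in> K"
proof (cases "z = \<zero>")
  case True
  then show ?thesis using subringE(2)[OF subfieldE(1)[OF K]] by simp
next
  case False
  obtain u v where "a * u = b * v + gcd a b" using bezout_nat[of a b] \<open>a > 0\<close> by auto
  then have uv: "a * u = b * v + 1" using \<open>coprime a b\<close> by simp
  have "(z [^] a) [^] u = (z [^] b) [^] v \<otimes> z"
    using z uv by (simp add: nat_pow_pow nat_pow_mult[symmetric])
  moreover have "(z [^] a) [^] u \<in> K" "(z [^] b) [^] v \<in> K"
    using subring_nat_pow_closed[OF subfieldE(1)[OF K]] za zb by auto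
  moreover have "(z [^] b) [^] v \<noteq> \<zero>"
    using nat_pow_eq_zero_imp_zero[of z "b * v"] z False by (auto simp: nat_pow_pow)
  ultimately show ?thesis
    using subfield_m_inv_simprule[OF K, of "(z [^] b) [^] v" z] z by auto
qed

lemma (in ring) dimension_eq_imp_eq:
  assumes K: "subfield K R" and E: "dimension n K E" and F: "dimension n K F" and "E \<subseteq> F"
  shows "E = F"
proof -
  obtain Us where "set Us \<subseteq> carrier R" "independent K Us" "length Us = n" "Span K Us = E"
    using exists_base[OF K E] by blast
  then show ?thesis
    using independent_length_eq_dimension[OF K F] Span_base_incl[OF K] \<open>E \<subseteq> F\<close> by blast
qed

lemma (in ring) exists_pth_root_outside:
  assumes M: "subring M R" and z: "z \<in> M" "z \<notin> K" and ze: "z [^] (p ^ e) \<in> K"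
  shows "\<exists>y\<in>M. y \<notin> K \<and> y [^] (p::nat) \<in> K"
  using ze
proof (induction e)
  case 0
  have "z \<in> carrier R" using z(1) subringE(1)[OF M] by blast
  then have "z [^] (p ^ 0) = z" by simp
  then show ?case using 0 z(2) by simp
next
  case (Suc e)
  show ?case
  proof (cases "z [^] (p ^ e) \<in> K")
    case True
    then show ?thesis by (rule Suc.IH)
  next
    case False
    have "(z [^] (p ^ e)) [^] p = z [^] (p ^ Suc e)"
      using z subringE(1)[OF M] by (auto simp: nat_pow_pow power_Suc2 simp del: power_Suc)
    then have "(z [^] (p ^ e)) [^] p \<in> K"
      using Suc.prems by simp
    then show ?thesis
      using False subring_nat_pow_closed[OF M z(1), of "p ^ e"] by blast
  qed
qed

locale char_p_field = field R for R (structure) +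
  fixes p :: nat
  assumes prime_p: "Factorial_Ring.prime p" and char_p: "add_pow R p \<one> = \<zero>"
begin

lemmas frobenius_add = freshmans_dream[OF prime_p char_p]
lemmas frobenius_uminus = freshmans_dream_uminus[OF prime_p char_p]
lemmas frobenius_minus = freshmans_dream_minus[OF prime_p char_p]

lemma frobenius_inj:
  assumes "x \<in> carrier R" "y \<in> carrier R" "x [^] p = y [^] p"
  shows "x = y"
proof -
  have "(x \<ominus> y) [^] p = \<zero>" using assms frobenius_minus[of x y] by (simp add: r_neg a_minus_def)
  then have "x \<ominus> y = \<zero>" using nat_pow_eq_zero_imp_zero assms by blast
  then show ?thesis using assms by (simp add: r_right_minus_eq)
qed

definition pth_roots :: "'a set \<Rightarrow> 'a set \<Rightarrow> 'a set" where
  "pth_roots K L = {x \<in> L. x [^] p \<in> K}"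

lemma subset_pth_roots: "subfield K R \<Longrightarrow> K \<subseteq> L \<Longrightarrow> K \<subseteq> pth_roots K L"
  using subring_nat_pow_closed[OF subfieldE(1)] by (auto simp: pth_roots_def)

lemma pth_roots_subfield:
  assumes K: "subfield K R" and L: "subfield L R"
  shows "subfield (pth_roots K L) R"
proof -
  note K_ring = subfieldE(1)[OF K] and L_ring = subfieldE(1)[OF L]
  have L_carrier: "L \<subseteq> carrier R" using subfieldE(3)[OF L] .
  have "subring (pth_roots K L) R"
  proof (rule subringI)
    show "pth_roots K L \<subseteq> carrier R" using L_carrier by (auto simp: pth_roots_def)
    show "\<one> \<in> pth_roots K L"
      using subringE(3)[OF K_ring] subringE(3)[OF L_ring] by (auto simp: pth_roots_def)
    show "\<ominus> h \<in> pth_roots K L" if "h \<in> pth_roots K L" for h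
      using that L_carrier frobenius_uminus subringE(5)[OF K_ring] subringE(5)[OF L_ring]
      by (auto simp: pth_roots_def)
    show "h1 \<otimes> h2 \<in> pth_roots K L" if "h1 \<in> pth_roots K L" "h2 \<in> pth_roots K L" for h1 h2
      using that L_carrier nat_pow_distrib subringE(6)[OF K_ring] subringE(6)[OF L_ring]
      by (auto simp: pth_roots_def subset_iff)
    show "h1 \<oplus> h2 \<in> pth_roots K L" if "h1 \<in> pth_roots K L" "h2 \<in> pth_roots K L" for h1 h2
      using that L_carrier frobenius_add subringE(7)[OF K_ring] subringE(7)[OF L_ring]
      by (auto simp: pth_roots_def subset_iff)
  qed
  then show ?thesis
  proof (rule subfieldI')
    fix h assume h: "h \<in> pth_roots K L - {\<zero>}"
    then have hc: "h \<in> carrier R" "h \<noteq> \<zero>" "h \<in> L" "h [^] p \<in> K"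
      using L_carrier by (auto simp: pth_roots_def)
    have "h [^] p \<otimes> inv h [^] p = \<one>"
      using hc field_Units by (simp add: nat_pow_distrib[symmetric])
    then have "inv (h [^] p) = inv h [^] p"
      using hc field_Units by (intro comm_inv_char) auto
    moreover have "h [^] p \<noteq> \<zero>" using hc nat_pow_eq_zero_imp_zero by blast
    ultimately show "inv h \<in> pth_roots K L"
      using hc subfield_m_inv(1)[OF L, of h] subfield_m_inv(1)[OF K, of "h [^] p"]
      by (auto simp: pth_roots_def)
  qed
qed

end

section \<open>Simple extensions by a \<open>p\<close>-th root\<close>

lemma (in ring_hom_ring) hom_add_pow_nat:
  "x \<in> carrier R \<Longrightarrow> h (add_pow R (n::nat) x) = add_pow S n (h x)"
  by (induction n) (auto simp: R.add.nat_pow_Suc S.add.nat_pow_Suc)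

lemma (in domain) divisor_of_prime_pow:
  assumes q: "q \<in> carrier R" "ring_prime q"
  shows "\<lbrakk> f \<in> carrier R; g \<in> carrier R; f \<otimes> g = q [^] (n::nat) \<rbrakk> \<Longrightarrow>
    \<exists>d\<le>n. \<exists>u\<in>Units R. f = q [^] d \<otimes> u"
proof (induction n arbitrary: f g)
  case 0
  then have "f \<in> Units R" using m_comm[of g f] unfolding Units_def by auto
  then show ?case using 0 by (intro exI[of _ 0]) (auto intro!: bexI[of _ f])
next
  case (Suc n)
  have q0: "q \<noteq> \<zero>" and q_prime: "prime R q" using ring_primeE[OF q] by auto
  have eq: "f \<otimes> g = q \<otimes> q [^] n" using Suc.prems q by (simp add: m_comm)
  then have "q divides f \<otimes> g" using q by (intro dividesI[of "q [^] n"]) auto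
  then have "q divides f \<or> q divides g" using q_prime Suc.prems(1,2) by (meson primeE)
  then show ?case
  proof
    assume "q divides f"
    then obtain f' where f': "f' \<in> carrier R" "f = q \<otimes> f'" by auto
    then have "q \<otimes> (f' \<otimes> g) = q \<otimes> q [^] n" using eq q Suc.prems by (simp add: m_assoc)
    then have "f' \<otimes> g = q [^] n" using f'(1) Suc.prems(2) q by (simp add: m_lcancel[OF q0 q(1)])
    then obtain d u where "d \<le> n" "u \<in> Units R" "f' = q [^] d \<otimes> u"
      using Suc.IH f'(1) Suc.prems(2) by blast
    moreover have "f = q [^] Suc d \<otimes> u"
      using f' calculation q Units_closed by (simp add: m_ac)
    ultimately show ?case by (intro exI[of _ "Suc d"]) auto
  next
    assume "q divides g"
    then obtain g' where g': "g' \<in> carrier R" "g = q \<otimes> g'" by auto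
    then have "q \<otimes> (f \<otimes> g') = q \<otimes> q [^] n" using eq q Suc.prems by (simp add: m_lcomm)
    then have "f \<otimes> g' = q [^] n" using g'(1) Suc.prems(1) q by (simp add: m_lcancel[OF q0 q(1)])
    then show ?case using Suc.IH Suc.prems(1) g'(1) le_Suc_eq by blast
  qed
qed

lemma (in domain) lead_coeff_pow:
  assumes "p \<in> carrier (poly_ring R)" "p \<noteq> []"
  shows "lead_coeff (p [^]\<^bsub>poly_ring R\<^esub> (n::nat)) = lead_coeff p [^] n"
proof -
  interpret UP: domain "poly_ring R"
    by (rule univ_poly_is_domain[OF carrier_is_subring])
  show ?thesis
  proof (induction n)
    case 0
    then show ?case by (simp add: univ_poly_one)
  next
    case (Suc n)
    have "p [^]\<^bsub>poly_ring R\<^esub> n \<in> carrier (poly_ring R)" "p [^]\<^bsub>poly_ring R\<^esub> n \<noteq> []"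
      using assms polynomial_pow_not_zero[of p n] by auto
    then show ?case
      using Suc assms poly_mult_lead_coeff[OF carrier_is_subring, of "p [^]\<^bsub>poly_ring R\<^esub> n" p]
      by (simp add: univ_poly_mult univ_poly_carrier)
  qed
qed

lemma (in field) monic_divisor_of_linear_pow:
  assumes x: "x \<in> carrier R" and f: "f \<in> carrier (poly_ring R)" "lead_coeff f = \<one>"
    and dvd: "f pdivides [\<one>, \<ominus> x] [^]\<^bsub>poly_ring R\<^esub> (n::nat)"
  shows "f = [\<one>, \<ominus> x] [^]\<^bsub>poly_ring R\<^esub> degree f"
proof -
  interpret UP: domain "poly_ring R"
    by (rule univ_poly_is_domain[OF carrier_is_subring])
  let ?q = "[\<one>, \<ominus> x]"
  have q: "?q \<in> carrier (poly_ring R)" "?q \<noteq> []" "degree ?q = 1" "lead_coeff ?q = \<one>"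
    using x by (auto simp: univ_poly_carrier[symmetric] polynomial_def)
  then have "pprime (carrier R) ?q"
    using degree_one_imp_pirreducible[OF carrier_is_subfield]
      pprime_iff_pirreducible[OF carrier_is_subfield] by blast
  moreover obtain g where "g \<in> carrier (poly_ring R)" "f \<otimes>\<^bsub>poly_ring R\<^esub> g = ?q [^]\<^bsub>poly_ring R\<^esub> n"
    using dvd unfolding pdivides_def factor_def by auto
  ultimately obtain d :: nat and u where u: "u \<in> Units (poly_ring R)"
    and f_eq: "f = ?q [^]\<^bsub>poly_ring R\<^esub> d \<otimes>\<^bsub>poly_ring R\<^esub> u"
    using UP.divisor_of_prime_pow[OF q(1)] f(1) by blast
  obtain c where c: "u = [c]" "c \<in> carrier R" "c \<noteq> \<zero>"
    using u univ_poly_units[OF carrier_is_subfield] by auto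
  have qd: "?q [^]\<^bsub>poly_ring R\<^esub> d \<in> carrier (poly_ring R)" "?q [^]\<^bsub>poly_ring R\<^esub> d \<noteq> []"
    "lead_coeff (?q [^]\<^bsub>poly_ring R\<^esub> d) = \<one>" "degree (?q [^]\<^bsub>poly_ring R\<^esub> d) = d"
    using q lead_coeff_pow[OF q(1,2)] polynomial_pow_not_zero[OF q(1,2)] polynomial_pow_degree[OF q(1)]
    by auto
  have "lead_coeff f = \<one> \<otimes> c"
    using f_eq c qd UP.Units_closed[OF u]
      poly_mult_lead_coeff[OF carrier_is_subring, of "?q [^]\<^bsub>poly_ring R\<^esub> d" "[c]"]
    by (simp add: univ_poly_mult univ_poly_carrier)
  then have "u = \<one>\<^bsub>poly_ring R\<^esub>" using f(2) c by (simp add: univ_poly_one)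
  then show ?thesis using f_eq qd by simp
qed

context char_p_field
begin

lemma linear_pow_char_mem_univ_poly:
  assumes K: "subfield K R" and x: "x \<in> carrier R" "x \<noteq> \<zero>" and xp: "x [^] p \<in> K"
  shows "[\<one>, \<ominus> x] [^]\<^bsub>poly_ring R\<^esub> p \<in> carrier (K[X])"
proof -
  interpret UP: domain "poly_ring R"
    by (rule univ_poly_is_domain[OF carrier_is_subring])
  interpret UP: cring "poly_ring R"
    by (rule univ_poly_is_cring[OF carrier_is_subring])
  interpret PC: ring_hom_ring R "poly_ring R" poly_of_const
    using canonical_embedding_ring_hom[OF carrier_is_subring] by simp
  have K_ring: "subring K R" using subfieldE(1)[OF K] .
  have xp_nonzero: "x [^] p \<noteq> \<zero>" using x nat_pow_eq_zero_imp_zero by blast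
  have char_UP: "add_pow (poly_ring R) p \<one>\<^bsub>poly_ring R\<^esub> = \<zero>\<^bsub>poly_ring R\<^esub>"
    using PC.hom_add_pow_nat[of \<one> p] char_p PC.hom_one PC.hom_zero by simp
  have X: "X \<in> carrier (poly_ring R)" using var_closed(1)[OF carrier_is_subring] .
  have const_x: "[x] \<in> carrier (poly_ring R)" "poly_of_const x = [x]"
    using x by (auto simp: univ_poly_carrier[symmetric] polynomial_def poly_of_const_def)
  have const_xp: "[x [^] p] \<in> carrier (K[X])" "poly_of_const (x [^] p) = [x [^] p]"
    using xp xp_nonzero const_is_polynomial[of "x [^] p" K]
    by (auto simp: univ_poly_carrier poly_of_const_def)
  have "[\<one>, \<ominus> x] = X \<ominus>\<^bsub>poly_ring R\<^esub> [x]"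
    using x unfolding a_minus_def univ_poly_a_inv_def'[OF carrier_is_subring const_x(1)]
    by (simp add: univ_poly_def var_def)
  then have "[\<one>, \<ominus> x] [^]\<^bsub>poly_ring R\<^esub> p
      = X [^]\<^bsub>poly_ring R\<^esub> p \<ominus>\<^bsub>poly_ring R\<^esub> [x] [^]\<^bsub>poly_ring R\<^esub> p"
    using UP.freshmans_dream_minus[OF prime_p char_UP X const_x(1)] by simp
  also have "[x] [^]\<^bsub>poly_ring R\<^esub> p = [x [^] p]"
    using PC.hom_nat_pow[OF x(1), of p] const_x(2) const_xp(2) by simp
  also have "X [^]\<^bsub>poly_ring R\<^esub> p \<ominus>\<^bsub>poly_ring R\<^esub> [x [^] p]
      = X [^]\<^bsub>K[X]\<^esub> p \<ominus>\<^bsub>K[X]\<^esub> [x [^] p]"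
  proof -
    have "X [^]\<^bsub>K[X]\<^esub> (n::nat) = X [^]\<^bsub>poly_ring R\<^esub> n" for n
      by (induction n) (simp_all add: univ_poly_one univ_poly_mult)
    then show ?thesis
      using univ_poly_a_minus_consistent[OF K_ring const_xp(1)] by simp
  qed
  also have "\<dots> \<in> carrier (K[X])"
  proof -
    interpret UPK: ring "K[X]" by (rule univ_poly_is_ring[OF K_ring])
    show ?thesis using var_closed(1)[OF K_ring] const_xp(1) by simp
  qed
  finally show ?thesis .
qed

lemma pth_root_algebraic:
  assumes K: "subfield K R" and x: "x \<in> carrier R" and xp: "x [^] p \<in> K"
  shows "(algebraic over K) x"
proof (cases "x = \<zero>")
  case True
  then show ?thesis using zero_is_algebraic[OF subfieldE(1)[OF K]] by simp
next
  case False
  let ?g = "[\<one>, \<ominus> x] [^]\<^bsub>poly_ring R\<^esub> p"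
  interpret UP: domain "poly_ring R"
    by (rule univ_poly_is_domain[OF carrier_is_subring])
  interpret eval_x: ring_hom_ring "poly_ring R" R "\<lambda>q. eval q x"
    by (rule eval_ring_hom[OF carrier_is_subring x])
  have q: "[\<one>, \<ominus> x] \<in> carrier (poly_ring R)"
    using x by (simp add: univ_poly_carrier[symmetric] polynomial_def)
  have "eval ?g x = eval [\<one>, \<ominus> x] x [^] p"
    using eval_x.hom_nat_pow[OF q] .
  also have "\<dots> = \<zero>"
    using x prime_gt_0_nat[OF prime_p] by (simp add: r_neg nat_pow_zero)
  finally show ?thesis
    using algebraicI[OF linear_pow_char_mem_univ_poly[OF K x False xp]]
      polynomial_pow_not_zero[OF q] by simp
qed

lemma pth_root_pow_mem_imp_dvd:
  assumes K: "subfield K R" and x: "x \<in> carrier R" "x [^] p \<in> K" "x \<notin> K"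
    and "x [^] d \<in> K" "d > 0"
  shows "p dvd d"
proof (rule ccontr)
  assume "\<not> p dvd d"
  then have "coprime d p" using prime_imp_coprime[OF prime_p] coprime_commute by blast
  then have "x \<in> K" using nat_pow_coprime_mem[OF K x(1)] assms by blast
  then show False using x(3) by simp
qed

lemma dimension_simple_extension_pth_root:
  assumes K: "subfield K R" and x: "x \<in> carrier R" and xp: "x [^] p \<in> K" and "x \<notin> K"
  shows "dimension p K (simple_extension K x)"
proof -
  interpret UP: domain "poly_ring R"
    by (rule univ_poly_is_domain[OF carrier_is_subring])
  interpret eval_x: ring_hom_ring "poly_ring R" R "\<lambda>q. eval q x"
    by (rule eval_ring_hom[OF carrier_is_subring x])
  interpret eval_0: ring_hom_ring "poly_ring R" R "\<lambda>q. eval q \<zero>"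
    by (rule eval_ring_hom[OF carrier_is_subring zero_closed])
  let ?q = "[\<one>, \<ominus> x]" and ?f = "Irr K x"
  have K_ring: "subring K R" using subfieldE(1)[OF K] .
  have x_nonzero: "x \<noteq> \<zero>" using \<open>x \<notin> K\<close> subringE(2)[OF K_ring] by auto
  have q: "?q \<in> carrier (poly_ring R)" "?q \<noteq> []" "degree ?q = 1"
    using x by (auto simp: univ_poly_carrier[symmetric] polynomial_def)
  note alg = pth_root_algebraic[OF K x xp]
  note f = IrrE[OF K x alg]
  have f_R: "?f \<in> carrier (poly_ring R)"
    using f(1) carrier_polynomial[OF K_ring] by (simp add: univ_poly_carrier[symmetric])
  have "eval (?q [^]\<^bsub>poly_ring R\<^esub> p) x = \<zero>"
    using eval_x.hom_nat_pow[OF q(1)] x prime_gt_0_nat[OF prime_p] by (simp add: r_neg nat_pow_zero)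
  then have f_dvd: "?f pdivides ?q [^]\<^bsub>poly_ring R\<^esub> p"
    using Irr_minimal[OF K x alg linear_pow_char_mem_univ_poly[OF K x x_nonzero xp]] by simp
  note f_eq = monic_divisor_of_linear_pow[OF x f_R f(3) f_dvd]
  define d where "d = degree ?f"
  have d_pos: "d > 0" using pirreducible_degree[OF K f(1,2)] d_def by simp
  have "d \<le> p"
    using pdivides_imp_degree_le[OF carrier_is_subring f_R UP.nat_pow_closed[OF q(1)]
        polynomial_pow_not_zero[OF q(1,2)] f_dvd]
      polynomial_pow_degree[OF q(1)] q(3) d_def by simp
  moreover have "p dvd d"
  proof (rule pth_root_pow_mem_imp_dvd[OF K _ _ _ _ d_pos])
    show "(\<ominus> x) [^] p \<in> K"
      using frobenius_uminus[OF x] xp subringE(5)[OF K_ring] by simp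
    show "\<ominus> x \<notin> K" using \<open>x \<notin> K\<close> subringE(5)[OF K_ring, of "\<ominus> x"] x by auto
    have "eval ?f \<zero> \<in> K"
      using const_term_simprules_shell(1)[OF K_ring f(1)] by (simp add: const_term_def)
    moreover have "eval ?f \<zero> = (\<ominus> x) [^] d"
      using eval_0.hom_nat_pow[OF q(1), of d] f_eq x d_def by simp
    ultimately show "(\<ominus> x) [^] d \<in> K" by simp
  qed (use x in simp)
  ultimately have "d = p" using dvd_imp_le[of p d] d_pos by simp
  then show ?thesis
    using dimension_simple_extension[OF K x alg] d_def by simp
qed

lemma simple_extension_pth_root_subfield:
  assumes "subfield K R" "x \<in> carrier R" "x [^] p \<in> K"
  shows "subfield (simple_extension K x) R"
  using simple_extension_is_subfield[OF assms(1,2)] pth_root_algebraic[OF assms] by simp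

section \<open>The socle of a radicial extension\<close>

lemma simple_extension_pth_root_in_atoms:
  assumes K: "subfield K R" and L: "subfield L R" and "K \<subseteq> L"
    and y: "y \<in> L" "y \<notin> K" "y [^] p \<in> K"
  shows "simple_extension K y \<in> atoms R K L"
proof -
  let ?S = "simple_extension K y"
  have L_carrier: "L \<subseteq> carrier R" using subfieldE(3)[OF L] .
  have S: "subfield ?S R" "K \<subseteq> ?S" "y \<in> ?S" "dimension p K ?S"
    using simple_extension_pth_root_subfield[OF K _ y(3)] simple_extension_incl[OF subfieldE(3)[OF K]]
      simple_extension_mem[OF subfieldE(1)[OF K]] dimension_simple_extension_pth_root[OF K _ y(3,2)]
      y(1) L_carrier by auto
  have S_sub: "?S \<subseteq> pth_roots K L"
    using simple_extension_subring_incl[OF subfieldE(1)[OF pth_roots_subfield[OF K L]]]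
      subset_pth_roots[OF K \<open>K \<subseteq> L\<close>] y by (auto simp: pth_roots_def)
  have "F = ?S" if F: "F \<in> interm R K ?S" "F \<noteq> K" for F
  proof -
    obtain z where z: "z \<in> F" "z \<notin> K" using F by (auto simp: interm_def)
    have F_sub: "subfield F R" "K \<subseteq> F" "F \<subseteq> ?S" using F by (auto simp: interm_def)
    then have "z \<in> carrier R" "z [^] p \<in> K"
      using z S_sub L_carrier by (auto simp: pth_roots_def)
    then have "dimension p K (simple_extension K z)"
      using dimension_simple_extension_pth_root[OF K] z(2) by blast
    moreover have "simple_extension K z \<subseteq> F"
      using simple_extension_subring_incl[OF subfieldE(1)[OF F_sub(1)] F_sub(2) z(1)] .
    ultimately have "simple_extension K z = ?S"
      using dimension_eq_imp_eq[OF K _ S(4)] F_sub(3) by blast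
    then show ?thesis using \<open>simple_extension K z \<subseteq> F\<close> F_sub(3) by blast
  qed
  moreover have "?S \<subseteq> L"
    using simple_extension_subring_incl[OF subfieldE(1)[OF L] \<open>K \<subseteq> L\<close> y(1)] .
  ultimately show ?thesis
    using S K y(2) by (auto simp: atoms_def interm_def minimal_ext_def)
qed

lemma atom_eq_simple_extension_pth_root:
  assumes K: "subfield K R" and M: "M \<in> atoms R K L"
    and radicial: "\<forall>z\<in>L. \<exists>e. z [^] (p ^ e) \<in> K"
  obtains y where "y \<in> M" "y \<notin> K" "y [^] p \<in> K" "M = simple_extension K y"
proof -
  have M': "subfield M R" "K \<subseteq> M" "M \<subseteq> L" "K \<noteq> M" "interm R K M = {K, M}"
    using M by (auto simp: atoms_def interm_def minimal_ext_def)
  obtain z where z: "z \<in> M" "z \<notin> K" using M'(2,4) by blast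
  moreover obtain e where "z [^] (p ^ e) \<in> K" using radicial z(1) M'(3) by blast
  ultimately obtain y where y: "y \<in> M" "y \<notin> K" "y [^] p \<in> K"
    using exists_pth_root_outside[OF subfieldE(1)[OF M'(1)]] by blast
  have "y \<in> carrier R" using y(1) subfieldE(3)[OF M'(1)] by blast
  then have "simple_extension K y \<in> interm R K M"
    using simple_extension_pth_root_subfield[OF K _ y(3)] simple_extension_incl[OF subfieldE(3)[OF K]]
      simple_extension_subring_incl[OF subfieldE(1)[OF M'(1)] M'(2) y(1)]
    by (auto simp: interm_def)
  moreover have "simple_extension K y \<noteq> K"
    using simple_extension_mem[OF subfieldE(1)[OF K] \<open>y \<in> carrier R\<close>] y(2) by blast
  ultimately have "M = simple_extension K y" using M'(5) by blast
  with y show ?thesis by (rule that)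
qed

lemma socle_eq_pth_roots:
  assumes K: "subfield K R" and L: "subfield L R" and "K \<subseteq> L"
    and radicial: "\<forall>z\<in>L. \<exists>e. z [^] (p ^ e) \<in> K"
  shows "socle R K L = pth_roots K L"
proof
  note roots = pth_roots_subfield[OF K L] subset_pth_roots[OF K \<open>K \<subseteq> L\<close>]
  have "M \<subseteq> pth_roots K L" if M: "M \<in> atoms R K L" for M
  proof -
    obtain y where "y \<in> M" "y \<notin> K" "y [^] p \<in> K" "M = simple_extension K y"
      using atom_eq_simple_extension_pth_root[OF K M radicial] .
    moreover have "M \<subseteq> L" using M by (auto simp: atoms_def interm_def)
    ultimately show ?thesis
      using simple_extension_subring_incl[OF subfieldE(1)[OF roots(1)] roots(2)]
      by (auto simp: pth_roots_def)
  qed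
  then have "K \<union> \<Union> (atoms R K L) \<subseteq> pth_roots K L" using roots(2) by blast
  then show "socle R K L \<subseteq> pth_roots K L"
    unfolding socle_def using generate_field_min_subfield1 roots(1) subfieldE(3)[OF roots(1)]
    by (meson order_trans)
  show "pth_roots K L \<subseteq> socle R K L"
  proof
    fix y assume y: "y \<in> pth_roots K L"
    show "y \<in> socle R K L"
    proof (cases "y \<in> K")
      case False
      have "y \<in> L" "y [^] p \<in> K" using y by (auto simp: pth_roots_def)
      then have "simple_extension K y \<in> atoms R K L" "y \<in> simple_extension K y"
        using simple_extension_pth_root_in_atoms[OF K L \<open>K \<subseteq> L\<close>] False
          simple_extension_mem[OF subfieldE(1)[OF K]] subfieldE(3)[OF L] by auto
      then show ?thesis unfolding socle_def by (auto intro: generate_field.incl)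
    qed (auto simp: socle_def intro: generate_field.incl)
  qed
qed

section \<open>The Loewy series under FIP\<close>

lemma finite_subfield_pth_root_mem:
  assumes K: "subfield K R" and "finite K" and y: "y \<in> carrier R" "y [^] p \<in> K"
  shows "y \<in> K"
proof -
  have K_carrier: "K \<subseteq> carrier R" using subfieldE(3)[OF K] .
  have "(\<lambda>z. z [^] p) ` K \<subseteq> K" using subring_nat_pow_closed[OF subfieldE(1)[OF K]] by auto
  moreover have "inj_on (\<lambda>z. z [^] p) K"
    by (rule inj_onI) (meson K_carrier frobenius_inj subsetD)
  ultimately have "(\<lambda>z. z [^] p) ` K = K" by (rule endo_inj_surj[OF \<open>finite K\<close>])
  then have "y [^] p \<in> (\<lambda>z. z [^] p) ` K" using y(2) by simp
  then obtain z where z: "z \<in> K" "y [^] p = z [^] p" by blast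
  then have "y = z" using frobenius_inj[OF y(1)] K_carrier by blast
  then show ?thesis using z(1) by simp
qed

lemma inj_on_simple_extension_pth_roots:
  assumes K: "subfield K R" and x: "x \<in> carrier R" "x [^] p \<in> K" "x \<notin> K"
    and y: "y \<in> carrier R" "y [^] p \<in> K" "y \<notin> simple_extension K x"
  shows "inj_on (\<lambda>c. simple_extension K (x \<oplus> c \<otimes> y)) K"
proof (rule inj_onI, rule ccontr)
  fix c d assume c: "c \<in> K" and d: "d \<in> K" and "c \<noteq> d"
    and eq: "simple_extension K (x \<oplus> c \<otimes> y) = simple_extension K (x \<oplus> d \<otimes> y)"
  have K_ring: "subring K R" using subfieldE(1)[OF K] .
  have cd: "c \<in> carrier R" "d \<in> carrier R" using c d subfieldE(3)[OF K] by auto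
  let ?z = "x \<oplus> c \<otimes> y" and ?F = "simple_extension K (x \<oplus> c \<otimes> y)"
  have z: "?z \<in> carrier R" "?z [^] p \<in> K"
    using x y c cd frobenius_add nat_pow_distrib subring_nat_pow_closed[OF K_ring]
      subringE(6,7)[OF K_ring] by auto
  have F: "subfield ?F R" "K \<subseteq> ?F" "?z \<in> ?F" "x \<oplus> d \<otimes> y \<in> ?F"
    using simple_extension_pth_root_subfield[OF K z] simple_extension_incl[OF subfieldE(3)[OF K] z(1)]
      simple_extension_mem[OF K_ring] eq x y cd by auto
  note F_ring = subfieldE(1)[OF F(1)]
  have "(c \<ominus> d) \<otimes> y = ?z \<ominus> (x \<oplus> d \<otimes> y)" using x y cd by algebra
  then have "(c \<ominus> d) \<otimes> y \<in> ?F" using F(3,4) subringE(5,7)[OF F_ring] by (simp add: a_minus_def)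
  moreover have "c \<ominus> d \<in> ?F - {\<zero>}"
    using \<open>c \<noteq> d\<close> cd subringE(5,7)[OF K_ring] c d F(2) r_right_minus_eq
    unfolding a_minus_def by blast
  ultimately have y_F: "y \<in> ?F" using subfield_m_inv_simprule[OF F(1)] y(1) by blast
  have "c \<otimes> y \<in> ?F" using F(2) c y_F subringE(6)[OF F_ring] by blast
  then have "?z \<ominus> c \<otimes> y \<in> ?F"
    using F(3) subringE(5,7)[OF F_ring] unfolding a_minus_def by blast
  moreover have "?z \<ominus> c \<otimes> y = x" using x y cd by algebra
  ultimately have "x \<in> ?F" by simp
  then have x_sub: "simple_extension K x \<subseteq> ?F"
    using simple_extension_subring_incl[OF F_ring F(2)] by blast
  show False
  proof (cases "?z \<in> K")
    case True
    then have "?F \<subseteq> K" using simple_extension_subring_incl[OF K_ring] by blast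
    then show False using x_sub simple_extension_mem[OF K_ring x(1)] x(3) by blast
  next
    case False
    have "simple_extension K x = ?F"
      by (rule dimension_eq_imp_eq[OF K dimension_simple_extension_pth_root[OF K x]
            dimension_simple_extension_pth_root[OF K z False] x_sub])
    then show False using y_F y(3) by simp
  qed
qed

lemma pth_roots_eq_simple_extension:
  assumes k: "subfield k R" and K: "subfield K R" and L: "subfield L R"
    and "k \<subseteq> K" "K \<subseteq> L" and fip: "FIP R k L"
    and x: "x \<in> L" "x \<notin> K" "x [^] p \<in> K"
  shows "pth_roots K L = simple_extension K x"
proof
  have L_carrier: "L \<subseteq> carrier R" using subfieldE(3)[OF L] .
  have roots: "subfield (pth_roots K L) R" "K \<subseteq> pth_roots K L" "x \<in> pth_roots K L"
    using pth_roots_subfield[OF K L] subset_pth_roots[OF K \<open>K \<subseteq> L\<close>] x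
    by (auto simp: pth_roots_def)
  then show "simple_extension K x \<subseteq> pth_roots K L"
    using simple_extension_subring_incl[OF subfieldE(1)[OF roots(1)]] by blast
  show "pth_roots K L \<subseteq> simple_extension K x"
  proof (rule ccontr)
    assume "\<not> pth_roots K L \<subseteq> simple_extension K x"
    then obtain y where y: "y \<in> L" "y [^] p \<in> K" "y \<notin> simple_extension K x"
      by (auto simp: pth_roots_def)
    let ?F = "\<lambda>c. simple_extension K (x \<oplus> c \<otimes> y)"
    have "?F ` K \<subseteq> interm R k L"
    proof
      fix M assume "M \<in> ?F ` K"
      then obtain c where c: "c \<in> K" "M = ?F c" by blast
      have z: "x \<oplus> c \<otimes> y \<in> L"
        using c x y \<open>K \<subseteq> L\<close> subringE(6,7)[OF subfieldE(1)[OF L]] by auto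
      then have "(x \<oplus> c \<otimes> y) [^] p \<in> K"
        using c x y L_carrier frobenius_add nat_pow_distrib subfieldE(3)[OF K]
          subring_nat_pow_closed[OF subfieldE(1)[OF K]] subringE(6,7)[OF subfieldE(1)[OF K]]
        by (auto simp: subset_iff)
      moreover have "x \<oplus> c \<otimes> y \<in> carrier R" using z L_carrier by blast
      ultimately show "M \<in> interm R k L"
        using c \<open>k \<subseteq> K\<close> simple_extension_pth_root_subfield[OF K]
          simple_extension_incl[OF subfieldE(3)[OF K]]
          simple_extension_subring_incl[OF subfieldE(1)[OF L] \<open>K \<subseteq> L\<close> z]
        by (auto simp: interm_def)
    qed
    then have "finite (?F ` K)" using fip finite_subset unfolding FIP_def by blast
    moreover have xy: "x \<in> carrier R" "y \<in> carrier R" using x(1) y(1) L_carrier by auto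
    ultimately have "finite K"
      using inj_on_simple_extension_pth_roots[OF K xy(1) x(3,2) xy(2) y(2,3)] finite_imageD by blast
    then have "x \<in> K" using finite_subfield_pth_root_mem[OF K _ xy(1) x(3)] by blast
    then show False using x(2) by blast
  qed
qed

lemma socle_radicial_FIP:
  assumes k: "subfield k R" and T: "subfield T R" and L: "subfield L R"
    and "k \<subseteq> T" "T \<subseteq> L" and fip: "FIP R k L"
    and radicial: "\<forall>z\<in>L. \<exists>e. z [^] (p ^ e) \<in> k"
    and M: "subfield M R" "T \<subset> M" "M \<subseteq> L"
  shows "socle R T L \<subseteq> M" and "dimension p T (socle R T L)"
proof -
  obtain z where z: "z \<in> M" "z \<notin> T" using M(2) by blast
  moreover obtain e where "z [^] (p ^ e) \<in> T" using radicial z(1) M(3) \<open>k \<subseteq> T\<close> by blast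
  ultimately obtain y where y: "y \<in> M" "y \<notin> T" "y [^] p \<in> T"
    using exists_pth_root_outside[OF subfieldE(1)[OF M(1)]] by blast
  have radicial_T: "\<forall>z\<in>L. \<exists>e. z [^] (p ^ e) \<in> T" using radicial \<open>k \<subseteq> T\<close> by blast
  have y_carrier: "y \<in> carrier R" using y(1) subfieldE(3)[OF M(1)] by blast
  have socle: "socle R T L = simple_extension T y"
    using socle_eq_pth_roots[OF T L \<open>T \<subseteq> L\<close> radicial_T]
      pth_roots_eq_simple_extension[OF k T L \<open>k \<subseteq> T\<close> \<open>T \<subseteq> L\<close> fip] y M(3) by blast
  show "socle R T L \<subseteq> M"
    unfolding socle using simple_extension_subring_incl[OF subfieldE(1)[OF M(1)]] M(2) y(1) by blast
  show "dimension p T (socle R T L)"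
    unfolding socle using dimension_simple_extension_pth_root[OF T y_carrier y(3,2)] .
qed

context
  fixes k L :: "'a set" and n :: nat
  assumes k: "subfield k R" and L: "subfield L R" and "k \<subseteq> L" and fip: "FIP R k L"
    and radicial: "\<forall>z\<in>L. \<exists>e. z [^] (p ^ e) \<in> k"
    and dim: "dimension (p ^ n) k L"
begin

lemma loewy_in_interm: "loewy R k L i \<in> interm R k L"
proof (induction i)
  case 0
  then show ?case using k \<open>k \<subseteq> L\<close> by (simp add: interm_def)
next
  case (Suc i)
  let ?T = "loewy R k L i"
  have T: "subfield ?T R" "k \<subseteq> ?T" "?T \<subseteq> L" using Suc.IH by (auto simp: interm_def)
  have "\<forall>z\<in>L. \<exists>e. z [^] (p ^ e) \<in> ?T" using radicial T(2) by blast
  then have "socle R ?T L = pth_roots ?T L"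
    using socle_eq_pth_roots[OF T(1) L T(3)] by blast
  then have "socle R ?T L \<in> interm R k L"
    using pth_roots_subfield[OF T(1) L] subset_pth_roots[OF T(1) T(3)] T(2)
    by (auto simp: interm_def pth_roots_def)
  then show ?case using L \<open>k \<subseteq> L\<close> by (simp add: interm_def)
qed

lemma loewy_neq_top:
  assumes "dimension (p ^ i) k (loewy R k L i)" "i < n"
  shows "loewy R k L i \<noteq> L"
  using assms dimension_is_inj[OF k _ dim] power_inject_exp[OF prime_gt_1_nat[OF prime_p]]
  by force

lemma dimension_loewy: "i \<le> n \<Longrightarrow> dimension (p ^ i) k (loewy R k L i)"
proof (induction i)
  case 0
  then show ?case using dimension_one[OF k] by simp
next
  case (Suc i)
  let ?T = "loewy R k L i"
  have T: "subfield ?T R" "k \<subseteq> ?T" "?T \<subseteq> L" using loewy_in_interm by (auto simp: interm_def)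
  have dim_T: "dimension (p ^ i) k ?T" using Suc by simp
  then have "?T \<noteq> L" using loewy_neq_top Suc.prems by simp
  then have "loewy R k L (Suc i) = socle R ?T L" by simp
  moreover have "dimension p ?T (socle R ?T L)"
    using socle_radicial_FIP(2)[OF k T(1) L T(2,3) fip radicial L] \<open>?T \<noteq> L\<close> T(3) by blast
  ultimately show ?case
    using telescopic_base[OF k T(1) dim_T] by (simp add: mult.commute)
qed

lemma loewy_top: "loewy R k L n = L"
  using dimension_eq_imp_eq[OF k dimension_loewy[of n] dim] loewy_in_interm
  by (auto simp: interm_def)

lemma loewy_length_eq: "loewy_length R k L = n"
  unfolding loewy_length_def
proof (rule Least_equality)
  show "loewy R k L n = L" by (rule loewy_top)
  show "n \<le> m" if "loewy R k L m = L" for m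
    using that loewy_neq_top dimension_loewy by (meson less_imp_le not_le)
qed

lemma interm_eq_loewy:
  assumes M: "M \<in> interm R k L"
  shows "\<exists>j\<le>n. M = loewy R k L j"
proof -
  have M': "subfield M R" "k \<subseteq> M" "M \<subseteq> L" using M by (auto simp: interm_def)
  have "loewy R k L i \<subseteq> M \<Longrightarrow> \<exists>j\<le>n. M = loewy R k L j" if "i \<le> n" for i
    using that
  proof (induction rule: inc_induct)
    case base
    then show ?case using loewy_top M'(3) by auto
  next
    case (step i)
    let ?T = "loewy R k L i"
    show ?case
    proof (cases "M = ?T")
      case False
      have T: "subfield ?T R" "k \<subseteq> ?T" "?T \<subseteq> L" using loewy_in_interm by (auto simp: interm_def)
      then have "?T \<noteq> L" using step.prems M'(3) False by blast
      then have "loewy R k L (Suc i) = socle R ?T L" by simp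
      also have "\<dots> \<subseteq> M"
        using socle_radicial_FIP(1)[OF k T(1) L T(2,3) fip radicial M'(1)] step.prems False M'(3)
        by blast
      finally show ?thesis by (rule step.IH)
    qed (use step.hyps in \<open>auto intro!: exI[of _ i]\<close>)
  qed
  then show ?thesis using M'(2) le0 by (metis loewy.simps(1))
qed

end

end

lemma (in field) socle_self:
  assumes "subfield K R"
  shows "socle R K K = K"
proof -
  have "atoms R K K = {}" by (auto simp: atoms_def minimal_ext_def interm_def)
  moreover have "generate_field R K = K"
    by (rule generate_fieldI[symmetric]) (use assms subfieldE(3) in auto)
  ultimately show ?thesis by (simp add: socle_def)
qed

lemma loewy_self: "loewy R K K i = K"
  by (induction i) auto

theorem proposition9p31:
  fixes R :: "('a, 'b) ring_scheme" and k L :: "'a set" and p n :: nat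
  assumes "field R"
    and "subfield k R" and "subfield L R" and "k \<subseteq> L"
    and "FCP R k L"
    and "radicial R k L"
    and "p = char_of R"
    and "ring.dimension R (p ^ n) k L"
  shows "socle R k L = {x \<in> L. x [^]\<^bsub>R\<^esub> p \<in> k}
         \<and> (FIP R k L \<longrightarrow>
              {loewy R k L i | i. i \<le> loewy_length R k L} = interm R k L
              \<and> loewy_length R k L = n)"
proof -
  interpret field R by fact
  note k = \<open>subfield k R\<close> and L = \<open>subfield L R\<close> and dim = \<open>dimension (p ^ n) k L\<close>
  show ?thesis
  proof (cases "p = 0")
    case True
    then have "L = k" using \<open>radicial R k L\<close> \<open>p = char_of R\<close> by (simp add: radicial_def)
    then have "n = 0"
      using dimension_is_inj[OF k dim[unfolded \<open>L = k\<close>] dimension_one[OF k]] True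
      by (cases n) auto
    moreover have "loewy_length R k k = 0" by (simp add: loewy_length_def loewy_self)
    ultimately show ?thesis
      using \<open>L = k\<close> True socle_self[OF k] loewy_self subringE(3)[OF subfieldE(1)[OF k]]
      by (auto simp: interm_def k)
  next
    case False
    then interpret char_p_field R p
      using prime_char_of add_pow_char_of \<open>p = char_of R\<close> by unfold_locales auto
    have radicial: "\<forall>z\<in>L. \<exists>e. z [^]\<^bsub>R\<^esub> (p ^ e) \<in> k"
      using \<open>radicial R k L\<close> \<open>p = char_of R\<close> False by (simp add: radicial_def)
    have "socle R k L = {x \<in> L. x [^]\<^bsub>R\<^esub> p \<in> k}"
      using socle_eq_pth_roots[OF k L \<open>k \<subseteq> L\<close> radicial] by (simp add: pth_roots_def)
    moreover have "{loewy R k L i | i. i \<le> loewy_length R k L} = interm R k L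
        \<and> loewy_length R k L = n" if fip: "FIP R k L"
      using loewy_length_eq[OF k L \<open>k \<subseteq> L\<close> fip radicial dim]
        loewy_in_interm[OF k L \<open>k \<subseteq> L\<close> fip radicial dim]
        interm_eq_loewy[OF k L \<open>k \<subseteq> L\<close> fip radicial dim]
      by blast
    ultimately show ?thesis by blast
  qed
qed

end
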